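(* Even superfunctions $u=u(x\,|\,\nu,\tau)$ and $z=z(x\,|\,\nu,\tau)$ of one even variable $x$ and two odd variables $\nu,\tau$ satisfy the super Hilbert–Cartan equation $$z_x=\tfrac12u_{xx}^2+u_{x\nu}u_{x\tau},\quad z_\nu=u_{xx}u_{x\nu},\quad z_\tau=u_{xx}u_{x\tau},\quad u_{\nu\tau}=-u_{xx}$$ if and only if there exist constants $c_0,\dots,c_4\in\mathbb C$ such that $u=c_0+c_1x+\tfrac12c_2x^2+\tfrac16c_3x^3+(c_2+c_3x)\nu\tau$ and $z=c_4+\tfrac12c_2^2x+\tfrac12c_2c_3x^2+\tfrac16c_3^2x^3+c_3(c_2+c_3x)\nu\tau$.
   Context: Derivatives with respect to odd variables are left derivatives, $u_{x\nu}=\partial_\nu\partial_x u$ etc., and $u_{\nu\tau}$ denotes the second derivative of $u$ with respect to $\tau$ and $\nu$ (with the convention $u_{\nu\tau}=-u_{\tau\nu}$ for odd $\nu,\tau$). *)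

theory Defs
  imports "HOL-Analysis.Analysis"
begin

text \<open>Superfunctions of one even variable x (complex) and two odd variables nu, tau,
  with complex coefficients:  SF a b c d  represents  a(x) + b(x) nu + c(x) tau + d(x) nu tau.\<close>

datatype sfun = SF (sf0: "complex \<Rightarrow> complex") (sfN: "complex \<Rightarrow> complex")
                   (sfT: "complex \<Rightarrow> complex") (sfNT: "complex \<Rightarrow> complex")

instantiation sfun :: "{zero, one, plus, minus, uminus, times}"
begin
definition "0 = SF (\<lambda>_. 0) (\<lambda>_. 0) (\<lambda>_. 0) (\<lambda>_. 0)"
definition "1 = SF (\<lambda>_. 1) (\<lambda>_. 0) (\<lambda>_. 0) (\<lambda>_. 0)"
definition "f + g = SF (\<lambda>x. sf0 f x + sf0 g x) (\<lambda>x. sfN f x + sfN g x)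
                       (\<lambda>x. sfT f x + sfT g x) (\<lambda>x. sfNT f x + sfNT g x)"
definition "f - g = SF (\<lambda>x. sf0 f x - sf0 g x) (\<lambda>x. sfN f x - sfN g x)
                       (\<lambda>x. sfT f x - sfT g x) (\<lambda>x. sfNT f x - sfNT g x)"
definition "- f = SF (\<lambda>x. - sf0 f x) (\<lambda>x. - sfN f x) (\<lambda>x. - sfT f x) (\<lambda>x. - sfNT f x)"
text \<open>Grassmann product: nu*nu = tau*tau = 0, tau*nu = - nu*tau.\<close>
definition "f * g = SF (\<lambda>x. sf0 f x * sf0 g x)
                       (\<lambda>x. sf0 f x * sfN g x + sfN f x * sf0 g x)
                       (\<lambda>x. sf0 f x * sfT g x + sfT f x * sf0 g x)
                       (\<lambda>x. sf0 f x * sfNT g x + sfNT f x * sf0 g x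
                            + sfN f x * sfT g x - sfT f x * sfN g x)"
instance ..
end

definition sconst :: "complex \<Rightarrow> sfun" where
  "sconst c = SF (\<lambda>_. c) (\<lambda>_. 0) (\<lambda>_. 0) (\<lambda>_. 0)"

definition sX :: sfun where "sX = SF (\<lambda>x. x) (\<lambda>_. 0) (\<lambda>_. 0) (\<lambda>_. 0)"
definition sNu :: sfun where "sNu = SF (\<lambda>_. 0) (\<lambda>_. 1) (\<lambda>_. 0) (\<lambda>_. 0)"
definition sTau :: sfun where "sTau = SF (\<lambda>_. 0) (\<lambda>_. 0) (\<lambda>_. 1) (\<lambda>_. 0)"

definition dX :: "sfun \<Rightarrow> sfun" where
  "dX f = SF (deriv (sf0 f)) (deriv (sfN f)) (deriv (sfT f)) (deriv (sfNT f))"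

text \<open>Left derivatives in the odd variables:
  d_nu(a + b nu + c tau + d nu tau) = b + d tau,
  d_tau(a + b nu + c tau + d nu tau) = c - d nu.\<close>
definition dNu :: "sfun \<Rightarrow> sfun" where
  "dNu f = SF (sfN f) (\<lambda>_. 0) (sfNT f) (\<lambda>_. 0)"
definition dTau :: "sfun \<Rightarrow> sfun" where
  "dTau f = SF (sfT f) (\<lambda>x. - sfNT f x) (\<lambda>_. 0) (\<lambda>_. 0)"

definition sf_eq_on :: "complex set \<Rightarrow> sfun \<Rightarrow> sfun \<Rightarrow> bool" where
  "sf_eq_on U f g \<longleftrightarrow> (\<forall>x\<in>U. sf0 f x = sf0 g x \<and> sfN f x = sfN g x
                              \<and> sfT f x = sfT g x \<and> sfNT f x = sfNT g x)"

definition sf_holo :: "complex set \<Rightarrow> sfun \<Rightarrow> bool" where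
  "sf_holo U f \<longleftrightarrow> sf0 f holomorphic_on U \<and> sfN f holomorphic_on U
                   \<and> sfT f holomorphic_on U \<and> sfNT f holomorphic_on U"

text \<open>Even superfunction: no odd components (coefficients are complex numbers).\<close>
definition sf_even :: "complex set \<Rightarrow> sfun \<Rightarrow> bool" where
  "sf_even U f \<longleftrightarrow> (\<forall>x\<in>U. sfN f x = 0 \<and> sfT f x = 0)"

end

theory Submission
  imports Defs "HOL-Complex_Analysis.Cauchy_Integral_Formula"
begin

text \<open>Write \<open>u = a + d \<nu>\<tau>\<close> and \<open>z = p + q \<nu>\<tau>\<close>. Read off in components, the equation
  \<open>u\<^sub>\<nu>\<^sub>\<tau> = - u\<^sub>x\<^sub>x\<close> says \<open>d = a''\<close> and \<open>d'' = 0\<close>, the equations for \<open>z\<^sub>\<nu>, z\<^sub>\<tau>\<close> both say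
  \<open>q = a'' d'\<close>, and the equation for \<open>z\<^sub>x\<close> says \<open>p' = a''\<^sup>2/2\<close> and \<open>q' = a'' d'' + d'\<^sup>2\<close>.
  So \<open>d\<close> is affine, \<open>a\<close> is a cubic, \<open>q\<close> is affine and \<open>p\<close> is a cubic; the last equation then
  holds automatically. Connectedness of the domain makes every integration constant global.\<close>

lemma sfun_component_simps [simp]:
  "sf0 (f * g) x = sf0 f x * sf0 g x"
  "sfN (f * g) x = sf0 f x * sfN g x + sfN f x * sf0 g x"
  "sfT (f * g) x = sf0 f x * sfT g x + sfT f x * sf0 g x"
  "sfNT (f * g) x = sf0 f x * sfNT g x + sfNT f x * sf0 g x + sfN f x * sfT g x - sfT f x * sfN g x"
  "sf0 (f + g) x = sf0 f x + sf0 g x" "sfN (f + g) x = sfN f x + sfN g x"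
  "sfT (f + g) x = sfT f x + sfT g x" "sfNT (f + g) x = sfNT f x + sfNT g x"
  "sf0 (- f) x = - sf0 f x" "sfN (- f) x = - sfN f x"
  "sfT (- f) x = - sfT f x" "sfNT (- f) x = - sfNT f x"
  "sf0 (sconst c) x = c" "sfN (sconst c) x = 0" "sfT (sconst c) x = 0" "sfNT (sconst c) x = 0"
  "sf0 sX x = x" "sfN sX x = 0" "sfT sX x = 0" "sfNT sX x = 0"
  "sf0 sNu x = 0" "sfN sNu x = 1" "sfT sNu x = 0" "sfNT sNu x = 0"
  "sf0 sTau x = 0" "sfN sTau x = 0" "sfT sTau x = 1" "sfNT sTau x = 0"
  by (simp_all add: times_sfun_def plus_sfun_def uminus_sfun_def sconst_def sX_def sNu_def sTau_def)

lemma sfun_derivative_simps [simp]: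
  "sf0 (dX f) = deriv (sf0 f)" "sfN (dX f) = deriv (sfN f)"
  "sfT (dX f) = deriv (sfT f)" "sfNT (dX f) = deriv (sfNT f)"
  "sf0 (dNu f) = sfN f" "sfN (dNu f) x = 0" "sfT (dNu f) = sfNT f" "sfNT (dNu f) x = 0"
  "sf0 (dTau f) = sfT f" "sfN (dTau f) x = - sfNT f x" "sfT (dTau f) x = 0" "sfNT (dTau f) x = 0"
  by (simp_all add: dX_def dNu_def dTau_def)

lemma sf_eq_on_even_iff:
  assumes "sf_even U f"
  shows "sf_eq_on U f g \<longleftrightarrow>
    (\<forall>x\<in>U. sf0 f x = sf0 g x \<and> sfNT f x = sfNT g x \<and> sfN g x = 0 \<and> sfT g x = 0)"
  using assms unfolding sf_eq_on_def sf_even_def by auto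

lemma deriv_transform_within_open:
  fixes f g :: "'a::real_normed_field \<Rightarrow> 'a"
  assumes "open S" "x \<in> S" "\<And>y. y \<in> S \<Longrightarrow> f y = g y" "(g has_field_derivative D) (at x)"
  shows "deriv f x = D"
  using has_field_derivative_transform_within_open[OF assms(4,1,2)] assms(3)
  by (metis DERIV_imp_deriv)

lemma deriv_eq_0_on_open:
  fixes f :: "'a::real_normed_field \<Rightarrow> 'a"
  assumes "open S" "x \<in> S" "\<And>y. y \<in> S \<Longrightarrow> f y = 0"
  shows "deriv f x = 0"
  by (rule deriv_transform_within_open[where g = "\<lambda>_. 0"]) (use assms in auto)

lemma DERIV_eq_imp_diff_constant_on_connected:
  fixes f g :: "'a::{real_normed_field,euclidean_space} \<Rightarrow> 'a"
  assumes "open S" "connected S"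
    and f: "\<And>x. x \<in> S \<Longrightarrow> (f has_field_derivative D x) (at x)"
    and g: "\<And>x. x \<in> S \<Longrightarrow> (g has_field_derivative D x) (at x)"
  obtains c where "\<And>x. x \<in> S \<Longrightarrow> f x = g x + c"
proof -
  have diff: "((\<lambda>x. f x - g x) has_field_derivative 0) (at x)" if "x \<in> S" for x
    using DERIV_diff[OF f g] that by simp
  then have "continuous_on S (\<lambda>x. f x - g x)"
    by (meson DERIV_continuous continuous_at_imp_continuous_on)
  then obtain c where "\<And>x. x \<in> S \<Longrightarrow> f x - g x = c"
    using DERIV_zero_connected_constant[OF assms(2,1) finite.emptyI] diff by blast
  then show thesis
    by (metis diff_add_cancel add.commute that)
qed

lemma holomorphic_eq_antiderivative_plus_const:
  assumes "open S" "connected S" "f holomorphic_on S"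
    and "\<And>x. x \<in> S \<Longrightarrow> deriv f x = D x"
    and "\<And>x. x \<in> S \<Longrightarrow> (g has_field_derivative D x) (at x)"
  obtains c where "\<And>x. x \<in> S \<Longrightarrow> f x = g x + c"
  using DERIV_eq_imp_diff_constant_on_connected[OF assms(1,2) _ assms(5)]
    holomorphic_derivI[OF assms(3,1)] assms(4) by metis

definition hilbert_cartan_components ::
  "complex set \<Rightarrow> (complex \<Rightarrow> complex) \<Rightarrow> (complex \<Rightarrow> complex) \<Rightarrow>
   (complex \<Rightarrow> complex) \<Rightarrow> (complex \<Rightarrow> complex) \<Rightarrow> bool" where
  "hilbert_cartan_components U a d p q \<longleftrightarrow> (\<forall>x\<in>U.
     deriv p x = deriv (deriv a) x * deriv (deriv a) x / 2
   \<and> deriv q x = deriv (deriv a) x * deriv (deriv d) x + deriv d x * deriv d x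
   \<and> q x = deriv (deriv a) x * deriv d x
   \<and> d x = deriv (deriv a) x
   \<and> deriv (deriv d) x = 0)"

lemma super_hilbert_cartan_iff_components:
  assumes "open U" "sf_even U u" "sf_even U z"
  shows "(sf_eq_on U (dX z) (sconst (1/2) * dX (dX u) * dX (dX u) + dNu (dX u) * dTau (dX u))
          \<and> sf_eq_on U (dNu z) (dX (dX u) * dNu (dX u))
          \<and> sf_eq_on U (dTau z) (dX (dX u) * dTau (dX u))
          \<and> sf_eq_on U (dNu (dTau u)) (- dX (dX u)))
     \<longleftrightarrow> hilbert_cartan_components U (sf0 u) (sfNT u) (sf0 z) (sfNT z)"
proof -
  have odd_0: "\<forall>x\<in>U. sfN u x = 0 \<and> sfT u x = 0 \<and> sfN z x = 0 \<and> sfT z x = 0"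
    using assms(2,3) unfolding sf_even_def by blast
  then have odd_deriv_0: "\<forall>x\<in>U. deriv (sfN u) x = 0 \<and> deriv (sfT u) x = 0
      \<and> deriv (deriv (sfN u)) x = 0 \<and> deriv (deriv (sfT u)) x = 0
      \<and> deriv (sfN z) x = 0 \<and> deriv (sfT z) x = 0"
    using deriv_eq_0_on_open[OF assms(1)] by blast
  show ?thesis
    unfolding sf_eq_on_def hilbert_cartan_components_def
    using odd_0 odd_deriv_0 by (auto simp: algebra_simps)
qed

lemma hilbert_cartan_components_imp_cubic:
  assumes "open U" "connected U"
    and "a holomorphic_on U" "d holomorphic_on U" "p holomorphic_on U"
    and "hilbert_cartan_components U a d p q"
  shows "\<exists>c0 c1 c2 c3 c4.
     (\<forall>x\<in>U. a x = c0 + c1 * x + c2 * x * x / 2 + c3 * x * x * x / 6 \<and> d x = c2 + c3 * x)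
   \<and> (\<forall>x\<in>U. p x = c4 + c2 * c2 * x / 2 + c2 * c3 * x * x / 2 + c3 * c3 * x * x * x / 6
              \<and> q x = c3 * (c2 + c3 * x))"
proof -
  note integrate = holomorphic_eq_antiderivative_plus_const[OF assms(1,2)]
  note hc = assms(6)[unfolded hilbert_cartan_components_def]
  have "deriv a holomorphic_on U" "deriv d holomorphic_on U"
    using holomorphic_deriv assms(1,3,4) by blast+
  obtain c3 where c3: "\<And>x. x \<in> U \<Longrightarrow> deriv d x = c3"
  proof (rule integrate[OF \<open>deriv d holomorphic_on U\<close>, where g = "\<lambda>_. 0"])
    show "deriv (deriv d) x = 0" if "x \<in> U" for x
      using hc that by blast
  qed (use that in auto)
  obtain c2 where c2: "\<And>x. x \<in> U \<Longrightarrow> d x = c3 * x + c2"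
  proof (rule integrate[OF assms(4), where g = "\<lambda>x. c3 * x"])
    show "deriv d x = c3" if "x \<in> U" for x
      using c3 that by simp
  qed (auto intro!: derivative_eq_intros)
  obtain c1 where c1: "\<And>x. x \<in> U \<Longrightarrow> deriv a x = (c2 * x + c3/2 * x * x) + c1"
  proof (rule integrate[OF \<open>deriv a holomorphic_on U\<close>, where g = "\<lambda>x. c2 * x + c3/2 * x * x"])
    show "deriv (deriv a) x = c2 + c3 * x" if "x \<in> U" for x
      using c2 hc that by (simp add: algebra_simps)
  qed (auto intro!: derivative_eq_intros)
  obtain c0 where c0: "\<And>x. x \<in> U \<Longrightarrow> a x = (c1 * x + c2/2 * x * x + c3/6 * x * x * x) + c0"
    by (rule integrate[OF assms(3) c1, where g = "\<lambda>x. c1 * x + c2/2 * x * x + c3/6 * x * x * x"])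
      (auto intro!: derivative_eq_intros simp: field_simps)
  obtain c4 where c4: "\<And>x. x \<in> U \<Longrightarrow>
      p x = (c2 * c2 * x / 2 + c2 * c3 * x * x / 2 + c3 * c3 * x * x * x / 6) + c4"
  proof (rule integrate[OF assms(5),
        where g = "\<lambda>x. c2 * c2 * x / 2 + c2 * c3 * x * x / 2 + c3 * c3 * x * x * x / 6"])
    show "deriv p x = (c2 + c3 * x) * (c2 + c3 * x) / 2" if "x \<in> U" for x
      using c2 hc that by (simp add: algebra_simps)
  qed (auto intro!: derivative_eq_intros simp: field_simps)
  show ?thesis
    using c0 c2 c3 c4 hc by (intro exI[of _ c0] exI[of _ c1] exI[of _ c2] exI[of _ c3] exI[of _ c4])
      (auto simp: algebra_simps)
qed

lemma cubic_imp_hilbert_cartan_components: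
  assumes "open U"
    and "\<forall>x\<in>U. a x = c0 + c1 * x + c2 * x * x / 2 + c3 * x * x * x / 6 \<and> d x = c2 + c3 * x"
    and "\<forall>x\<in>U. p x = c4 + c2 * c2 * x / 2 + c2 * c3 * x * x / 2 + c3 * c3 * x * x * x / 6
              \<and> q x = c3 * (c2 + c3 * x)"
  shows "hilbert_cartan_components U a d p q"
proof -
  note differentiate = deriv_transform_within_open[OF assms(1)]
  have a1: "deriv a x = c1 + c2 * x + c3 * x * x / 2" if "x \<in> U" for x
    by (rule differentiate[OF that, where g = "\<lambda>x. c0 + c1 * x + c2 * x * x / 2 + c3 * x * x * x / 6"]) (use assms(2) in \<open>auto intro!: derivative_eq_intros simp: field_simps\<close>)
  have a2: "deriv (deriv a) x = c2 + c3 * x" if "x \<in> U" for x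
    by (rule differentiate[OF that a1]) (auto intro!: derivative_eq_intros simp: field_simps)
  have d1: "deriv d x = c3" if "x \<in> U" for x
    by (rule differentiate[OF that, where g = "\<lambda>x. c2 + c3 * x"]) (use assms(2) in \<open>auto intro!: derivative_eq_intros\<close>)
  have d2: "deriv (deriv d) x = 0" if "x \<in> U" for x
    by (rule differentiate[OF that d1]) (auto intro!: derivative_eq_intros)
  have p1: "deriv p x = (c2 + c3 * x) * (c2 + c3 * x) / 2" if "x \<in> U" for x
    by (rule differentiate[OF that,
          where g = "\<lambda>x. c4 + c2 * c2 * x / 2 + c2 * c3 * x * x / 2 + c3 * c3 * x * x * x / 6"]) (use assms(3) in \<open>auto intro!: derivative_eq_intros simp: field_simps\<close>)
  have q1: "deriv q x = c3 * c3" if "x \<in> U" for x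
    by (rule differentiate[OF that, where g = "\<lambda>x. c3 * (c2 + c3 * x)"]) (use assms(3) in \<open>auto intro!: derivative_eq_intros\<close>)
  show ?thesis
    unfolding hilbert_cartan_components_def
    using a2 d1 d2 p1 q1 assms(2,3) by (auto simp: algebra_simps)
qed

lemma hilbert_cartan_components_iff_cubic:
  assumes "open U" "connected U"
    and "a holomorphic_on U" "d holomorphic_on U" "p holomorphic_on U"
  shows "hilbert_cartan_components U a d p q \<longleftrightarrow> (\<exists>c0 c1 c2 c3 c4.
     (\<forall>x\<in>U. a x = c0 + c1 * x + c2 * x * x / 2 + c3 * x * x * x / 6 \<and> d x = c2 + c3 * x)
   \<and> (\<forall>x\<in>U. p x = c4 + c2 * c2 * x / 2 + c2 * c3 * x * x / 2 + c3 * c3 * x * x * x / 6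
              \<and> q x = c3 * (c2 + c3 * x)))"
  using hilbert_cartan_components_imp_cubic[OF assms]
    cubic_imp_hilbert_cartan_components[OF assms(1)] by blast

theorem proposition5p8:
  fixes U :: "complex set" and u z :: sfun
  assumes "open U" and "connected U"
    and "sf_holo U u" and "sf_holo U z"
    and "sf_even U u" and "sf_even U z"
  shows "(sf_eq_on U (dX z) (sconst (1/2) * dX (dX u) * dX (dX u) + dNu (dX u) * dTau (dX u))
          \<and> sf_eq_on U (dNu z) (dX (dX u) * dNu (dX u))
          \<and> sf_eq_on U (dTau z) (dX (dX u) * dTau (dX u))
          \<and> sf_eq_on U (dNu (dTau u)) (- dX (dX u)))
     \<longleftrightarrow>
     (\<exists>c0 c1 c2 c3 c4 :: complex.
        sf_eq_on U u (sconst c0 + sconst c1 * sX + sconst (1/2) * sconst c2 * sX * sX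
                      + sconst (1/6) * sconst c3 * sX * sX * sX
                      + (sconst c2 + sconst c3 * sX) * sNu * sTau)
      \<and> sf_eq_on U z (sconst c4 + sconst (1/2) * sconst c2 * sconst c2 * sX
                      + sconst (1/2) * sconst c2 * sconst c3 * sX * sX
                      + sconst (1/6) * sconst c3 * sconst c3 * sX * sX * sX
                      + sconst c3 * (sconst c2 + sconst c3 * sX) * sNu * sTau))"
proof -
  have "sf0 u holomorphic_on U" "sfNT u holomorphic_on U" "sf0 z holomorphic_on U"
    using assms(3,4) unfolding sf_holo_def by auto
  note components_iff_cubic = hilbert_cartan_components_iff_cubic[OF assms(1,2) this]
  show ?thesis
    unfolding super_hilbert_cartan_iff_components[OF assms(1,5,6)] components_iff_cubic
    by (simp add: sf_eq_on_even_iff[OF assms(5)] sf_eq_on_even_iff[OF assms(6)])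
qed

end
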